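(* Let $a_1,\dots,a_n\in\overline K$ ($n\ge2$) be pairwise distinct and $\mu=(\mu_1,\dots,\mu_n)$ positive integers. Let $A_\mu$ be the generalized magic matrix of the bouquet with multiplicities $\prod_i(y-a_i)^{\mu_i}$ and $(\mathcal R,\gamma)$ the tree associated with the underlying bouquet $(a_1,\dots,a_n)$. Then $A_\mu=\sum_{T\in\mathcal R}\gamma(T)A_\mu(T)$.
   Context: $\overline{K}=\bigcup_{d\ge1}\mathbf{C}[[x^{1/d}]][1/x]$ with valuation $\nu$; $m_{i,j}=\nu(a_i-a_j)$. $A_\mu=(\alpha_{i,j})$ with $\alpha_{i,j}=-\mu_im_{i,j}$ for $i\ne j$ and $\alpha_{i,i}=\sum_{k\neq i}\mu_km_{k,i}$. For $T\subset T_0=\{1,\dots,n\}$ with $|T|\ge2$, $A_\mu(T)=(\alpha_{i,j})$ with $\alpha_{i,j}=-\mu_i$ if $i\ne j$ and $\{i,j\}\subset T$, $\alpha_{i,i}=\sum_{k\ne i,k\in T}\mu_k$ if $i\in T$, $0$ otherwise. A "rameau" is $T\subset T_0$ with $|T|\ge2$ such that $m_{i,j}>m_{i,k}=m_{j,k}$ for all $i\neq j$ in $T$, $k\notin T$; $\mathcal R$ is the set of rameaux; $\alpha(T)=\inf\{m_{i,j}:i\ne j\in T\}$; $\gamma(T_0)=\alpha(T_0)$ and for $T\ne T_0$, $\gamma(T)=\alpha(T)-\alpha(T')$ with $T'$ the smallest rameau strictly containing $T$. *)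

theory Defs
  imports Complex_Main
begin

text \<open>Elements of K-bar = union over d of C[[x^(1/d)]][1/x] (Puiseux series), represented
 by their coefficient function q \<mapsto> coefficient of x^q, q rational.\<close>
definition puiseux :: "(rat \<Rightarrow> complex) set" where
  "puiseux = {f. \<exists>d::nat. d > 0 \<and> (\<exists>N::int. \<forall>q. f q \<noteq> 0 \<longrightarrow>
                 (\<exists>k::int. k \<ge> N \<and> q = of_int k / of_nat d))}"

definition val :: "(rat \<Rightarrow> complex) \<Rightarrow> rat" where
  "val f = (THE q. f q \<noteq> 0 \<and> (\<forall>p<q. f p = 0))"

definition mval :: "(nat \<Rightarrow> rat \<Rightarrow> complex) \<Rightarrow> nat \<Rightarrow> nat \<Rightarrow> rat" where
  "mval a i j = val (\<lambda>q. a i q - a j q)"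

definition magic :: "(nat \<Rightarrow> rat \<Rightarrow> complex) \<Rightarrow> (nat \<Rightarrow> nat) \<Rightarrow> nat \<Rightarrow> nat \<Rightarrow> nat \<Rightarrow> rat" where
  "magic a \<mu> n i j = (if i = j then (\<Sum>k\<in>{1..n}-{i}. of_nat (\<mu> k) * mval a k i)
                      else - of_nat (\<mu> i) * mval a i j)"

definition magicT :: "(nat \<Rightarrow> nat) \<Rightarrow> nat set \<Rightarrow> nat \<Rightarrow> nat \<Rightarrow> rat" where
  "magicT \<mu> T i j = (if i \<in> T \<and> j \<in> T then
       (if i = j then (\<Sum>k\<in>T-{i}. of_nat (\<mu> k)) else - of_nat (\<mu> i))
     else 0)"

definition rameaux :: "(nat \<Rightarrow> rat \<Rightarrow> complex) \<Rightarrow> nat \<Rightarrow> nat set set" where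
  "rameaux a n = {T. T \<subseteq> {1..n} \<and> card T \<ge> 2 \<and>
     (\<forall>i\<in>T. \<forall>j\<in>T. \<forall>k\<in>{1..n}-T. i \<noteq> j \<longrightarrow>
        mval a i j > mval a i k \<and> mval a i k = mval a j k)}"

definition alphaT :: "(nat \<Rightarrow> rat \<Rightarrow> complex) \<Rightarrow> nat set \<Rightarrow> rat" where
  "alphaT a T = Min {mval a i j | i j. i \<in> T \<and> j \<in> T \<and> i \<noteq> j}"

definition gammaT :: "(nat \<Rightarrow> rat \<Rightarrow> complex) \<Rightarrow> nat \<Rightarrow> nat set \<Rightarrow> rat" where
  "gammaT a n T = (if T = {1..n} then alphaT a T
     else alphaT a T - alphaT a (THE T'. T' \<in> rameaux a n \<and> T \<subset> T' \<and>
                                      (\<forall>S\<in>rameaux a n. T \<subset> S \<longrightarrow> T' \<subseteq> S)))"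

end

theory Submission
  imports Defs
begin

text \<open>The valuation is ultrametric, which makes the rameaux exactly the closed balls
  \<open>{k. m(i,k) \<ge> m(i,j)}\<close>. Hence the rameaux containing two indices \<open>i \<noteq> j\<close> form a chain
  starting at a ball \<open>B\<close> with \<open>\<alpha>(B) = m(i,j)\<close> and ending at \<open>{1..n}\<close>, along which the
  \<open>\<gamma>\<close>'s telescope to \<open>m(i,j)\<close>. Comparing the entries of both matrices then reduces to
  this identity.\<close>

section \<open>The valuation is ultrametric\<close>

lemma val_eqI:
  assumes "f q \<noteq> 0" "\<forall>p<q. f p = 0"
  shows "val f = q"
  unfolding val_def
proof (rule the_equality)
  fix q' assume "f q' \<noteq> 0 \<and> (\<forall>p<q'. f p = 0)"
  with assms show "q' = q" by (metis linorder_neqE)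
qed (use assms in blast)

lemma val_uminus: "val (\<lambda>q. - f q) = val f"
  unfolding val_def by simp

lemma mval_commute: "mval a i j = mval a j i"
  unfolding mval_def using val_uminus[of "\<lambda>q. a i q - a j q"] by simp

lemma puiseux_diff:
  assumes "f \<in> puiseux" "g \<in> puiseux"
  shows "(\<lambda>q. f q - g q) \<in> puiseux"
proof -
  obtain d1 N1 where d1: "d1 > 0"
    and f: "\<forall>q. f q \<noteq> 0 \<longrightarrow> (\<exists>k::int. k \<ge> N1 \<and> q = of_int k / of_nat d1)"
    using assms(1) unfolding puiseux_def by blast
  obtain d2 N2 where d2: "d2 > 0"
    and g: "\<forall>q. g q \<noteq> 0 \<longrightarrow> (\<exists>k::int. k \<ge> N2 \<and> q = of_int k / of_nat d2)"
    using assms(2) unfolding puiseux_def by blast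
  define N where "N = min (N1 * int d2) (N2 * int d1)"
  have rescale: "\<exists>k'::int. k' \<ge> N \<and> q = of_int k' / of_nat (d * e)"
    if "k \<ge> M" "q = (of_int k / of_nat d :: rat)" "d > 0" "e > 0" "M * int e \<ge> N" for k M q d e
  proof (intro exI conjI)
    show "N \<le> k * int e" using that(1,4,5) mult_right_mono[of M k "int e"] by linarith
    show "q = of_int (k * int e) / of_nat (d * e)" using that(2-4) by simp
  qed
  have "\<exists>k::int. k \<ge> N \<and> q = of_int k / of_nat (d1 * d2)" if nz: "f q - g q \<noteq> 0" for q
  proof (cases "f q \<noteq> 0")
    case True
    then obtain k where "k \<ge> N1" "q = of_int k / of_nat d1" using f by blast
    then show ?thesis
      using d1 d2 by (intro rescale[where k = k and M = N1]) (simp_all add: N_def min_le_iff_disj)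
  next
    case False
    then obtain k where "k \<ge> N2" "q = of_int k / of_nat d2" using g nz by auto
    then have "\<exists>k::int. k \<ge> N \<and> q = of_int k / of_nat (d2 * d1)"
      using d1 d2 by (intro rescale[where k = k and M = N2]) (simp_all add: N_def min_le_iff_disj)
    then show ?thesis by (simp only: mult.commute)
  qed
  moreover have "d1 * d2 > 0" using d1 d2 by simp
  ultimately show ?thesis unfolding puiseux_def by blast
qed

lemma puiseux_val:
  assumes "f \<in> puiseux" "f q \<noteq> 0"
  shows "f (val f) \<noteq> 0" "\<forall>p<val f. f p = 0"
proof -
  obtain d N where d: "d > 0"
    and h: "\<forall>q. f q \<noteq> 0 \<longrightarrow> (\<exists>k::int. k \<ge> N \<and> q = of_int k / of_nat d)"
    using assms(1) unfolding puiseux_def by blast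
  define exponent where "exponent m = (of_int (N + int m) / of_nat d :: rat)" for m
  have mono: "exponent m \<le> exponent m'" if "m \<le> m'" for m m'
    using that d by (simp add: exponent_def divide_right_mono)
  have support: "\<exists>m. p = exponent m" if nz: "f p \<noteq> 0" for p
  proof -
    obtain k where "k \<ge> N" "p = of_int k / of_nat d" using h nz by blast
    then show ?thesis by (intro exI[of _ "nat (k - N)"]) (simp add: exponent_def)
  qed
  define m0 where "m0 = (LEAST m. f (exponent m) \<noteq> 0)"
  obtain m where "q = exponent m" using support[OF assms(2)] by blast
  then have "f (exponent m) \<noteq> 0" using assms(2) by simp
  then have nz: "f (exponent m0) \<noteq> 0" unfolding m0_def by (rule LeastI)
  have "f p = 0" if "p < exponent m0" for p
  proof (rule ccontr)
    assume "f p \<noteq> 0"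
    then obtain m where m: "p = exponent m" "f (exponent m) \<noteq> 0" using support by blast
    have "m0 \<le> m" using m(2) unfolding m0_def by (rule Least_le)
    then have "exponent m0 \<le> p" using mono m(1) by simp
    with that show False by simp
  qed
  then have "val f = exponent m0" using nz by (intro val_eqI) auto
  then show "f (val f) \<noteq> 0" "\<forall>p<val f. f p = 0" using nz \<open>\<And>p. p < exponent m0 \<Longrightarrow> f p = 0\<close>
    by auto
qed

lemma mval_ultrametric:
  assumes "a i \<in> puiseux" "a j \<in> puiseux" "a k \<in> puiseux"
    and "a i \<noteq> a j" "a j \<noteq> a k" "a i \<noteq> a k"
  shows "min (mval a i j) (mval a j k) \<le> mval a i k"
proof (rule ccontr)
  define f where "f q = a i q - a j q" for q
  define g where "g q = a j q - a k q" for q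
  define h where "h q = a i q - a k q" for q
  obtain qf qg qh where "a i qf \<noteq> a j qf" "a j qg \<noteq> a k qg" "a i qh \<noteq> a k qh"
    using assms(4-6) by blast
  then have nz: "f qf \<noteq> 0" "g qg \<noteq> 0" "h qh \<noteq> 0" by (simp_all add: f_def g_def h_def)
  have "f \<in> puiseux" "g \<in> puiseux" "h \<in> puiseux"
    unfolding f_def g_def h_def using assms(1-3) by (auto intro: puiseux_diff)
  then have f: "\<forall>p<val f. f p = 0" and g: "\<forall>p<val g. g p = 0" and h: "h (val h) \<noteq> 0"
    using puiseux_val nz by blast+
  assume "\<not> min (mval a i j) (mval a j k) \<le> mval a i k"
  then have "val h < val f" "val h < val g" unfolding mval_def f_def g_def h_def by auto
  then have "h (val h) = f (val h) + g (val h)" "f (val h) = 0" "g (val h) = 0"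
    using f g unfolding f_def g_def h_def by auto
  with h show False by simp
qed

definition ultrametric_mval :: "(nat \<Rightarrow> rat \<Rightarrow> complex) \<Rightarrow> nat \<Rightarrow> bool" where
  "ultrametric_mval a n \<longleftrightarrow> (\<forall>i\<in>{1..n}. \<forall>j\<in>{1..n}. \<forall>k\<in>{1..n}. i \<noteq> j \<and> j \<noteq> k \<and> i \<noteq> k \<longrightarrow>
      min (mval a i j) (mval a j k) \<le> mval a i k)"

lemma ultrametric_mval_if_puiseux:
  assumes "\<forall>i\<in>{1..n}. a i \<in> puiseux" "inj_on a {1..n}"
  shows "ultrametric_mval a n"
  unfolding ultrametric_mval_def
proof (intro ballI impI)
  fix i j k assume "i \<in> {1..n}" "j \<in> {1..n}" "k \<in> {1..n}" "i \<noteq> j \<and> j \<noteq> k \<and> i \<noteq> k"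
  with assms show "min (mval a i j) (mval a j k) \<le> mval a i k"
    by (intro mval_ultrametric) (auto dest: inj_on_contraD)
qed

lemma ultrametric_mvalD:
  "ultrametric_mval a n \<Longrightarrow> i \<in> {1..n} \<Longrightarrow> j \<in> {1..n} \<Longrightarrow> k \<in> {1..n} \<Longrightarrow>
    i \<noteq> j \<Longrightarrow> j \<noteq> k \<Longrightarrow> i \<noteq> k \<Longrightarrow> min (mval a i j) (mval a j k) \<le> mval a i k"
  unfolding ultrametric_mval_def by blast

lemma mval_isosceles:
  assumes U: "ultrametric_mval a n" and "i \<in> {1..n}" "p \<in> {1..n}" "k \<in> {1..n}"
    and "i \<noteq> p" "p \<noteq> k" "i \<noteq> k" and "mval a i k < mval a i p"
  shows "mval a p k = mval a i k"
  using ultrametric_mvalD[OF U, of p i k] ultrametric_mvalD[OF U, of i p k] assms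
    mval_commute[of a p i] by (auto simp: min_def split: if_splits)

section \<open>The tree of rameaux\<close>

lemma rameauxD:
  assumes "T \<in> rameaux a n"
  shows "T \<subseteq> {1..n}" "card T \<ge> 2"
    "\<And>i j k. i \<in> T \<Longrightarrow> j \<in> T \<Longrightarrow> k \<in> {1..n} - T \<Longrightarrow> i \<noteq> j \<Longrightarrow>
      mval a i k < mval a i j \<and> mval a i k = mval a j k"
  using assms unfolding rameaux_def by blast+

lemma finite_rameaux: "finite (rameaux a n)"
proof (rule finite_subset)
  show "rameaux a n \<subseteq> Pow {1..n}" using rameauxD(1) by blast
qed simp

lemma atLeastAtMost_in_rameaux: "n \<ge> 2 \<Longrightarrow> {1..n} \<in> rameaux a n"
  unfolding rameaux_def by auto

lemma rameaux_laminar: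
  assumes T: "T \<in> rameaux a n" and S: "S \<in> rameaux a n" and "x \<in> T" "x \<in> S"
  shows "T \<subseteq> S \<or> S \<subseteq> T"
proof (rule ccontr)
  assume "\<not> (T \<subseteq> S \<or> S \<subseteq> T)"
  then obtain y z where y: "y \<in> T" "y \<notin> S" and z: "z \<in> S" "z \<notin> T" by blast
  have out: "y \<in> {1..n} - S" "z \<in> {1..n} - T" and "x \<noteq> y" "x \<noteq> z"
    using y z rameauxD(1)[OF T] rameauxD(1)[OF S] assms(3,4) by auto
  have "mval a x z < mval a x y" using rameauxD(3)[OF T assms(3) y(1) out(2) \<open>x \<noteq> y\<close>] by simp
  moreover have "mval a x y < mval a x z"
    using rameauxD(3)[OF S assms(4) z(1) out(1) \<open>x \<noteq> z\<close>] by simp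
  ultimately show False by simp
qed

lemma rameau_parent_exists:
  assumes n: "n \<ge> 2" and T: "T \<in> rameaux a n" "T \<noteq> {1..n}"
  obtains P where "P \<in> rameaux a n" "T \<subset> P" "\<forall>S\<in>rameaux a n. T \<subset> S \<longrightarrow> P \<subseteq> S"
proof -
  define C where "C = {S \<in> rameaux a n. T \<subset> S}"
  have "finite C" unfolding C_def using finite_rameaux by simp
  moreover have "{1..n} \<in> C"
    unfolding C_def using atLeastAtMost_in_rameaux[OF n] rameauxD(1)[OF T(1)] T(2) by auto
  ultimately have "Min (card ` C) \<in> card ` C" by (intro Min_in) auto
  then obtain P where P: "P \<in> C" "card P = Min (card ` C)" by auto
  then have PR: "P \<in> rameaux a n" "T \<subset> P" by (simp_all add: C_def)
  have "finite P" by (rule finite_subset[OF rameauxD(1)[OF PR(1)]]) simp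
  have "card T \<noteq> 0" using rameauxD(2)[OF T(1)] by simp
  then obtain x where x: "x \<in> T" by fastforce
  have "P \<subseteq> S" if S: "S \<in> rameaux a n" "T \<subset> S" for S
  proof -
    have "card P \<le> card S"
      unfolding P(2) using \<open>finite C\<close> S by (intro Min_le) (auto simp: C_def)
    then have "\<not> S \<subset> P" using psubset_card_mono[OF \<open>finite P\<close>, of S] by linarith
    moreover have "P \<subseteq> S \<or> S \<subseteq> P" using rameaux_laminar[OF PR(1) S(1)] x PR(2) S(2) by blast
    ultimately show ?thesis by blast
  qed
  with PR that show ?thesis by blast
qed

lemma gammaT_eq_parent:
  assumes "T \<noteq> {1..n}"
    and "P \<in> rameaux a n" "T \<subset> P" "\<forall>S\<in>rameaux a n. T \<subset> S \<longrightarrow> P \<subseteq> S"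
  shows "gammaT a n T = alphaT a T - alphaT a P"
proof -
  have "(THE P. P \<in> rameaux a n \<and> T \<subset> P \<and> (\<forall>S\<in>rameaux a n. T \<subset> S \<longrightarrow> P \<subseteq> S)) = P"
  proof (rule the_equality)
    fix P' assume "P' \<in> rameaux a n \<and> T \<subset> P' \<and> (\<forall>S\<in>rameaux a n. T \<subset> S \<longrightarrow> P' \<subseteq> S)"
    with assms(2-4) show "P' = P" by (intro subset_antisym) auto
  qed (use assms(2-4) in blast)
  then show ?thesis using assms(1) unfolding gammaT_def by simp
qed

lemma sum_gammaT_supersets:
  assumes n: "n \<ge> 2" and S: "S \<in> rameaux a n"
  shows "(\<Sum>T\<in>{T\<in>rameaux a n. S \<subseteq> T}. gammaT a n T) = alphaT a S"
  using S
proof (induction "n - card S" arbitrary: S rule: less_induct)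
  case less
  show ?case
  proof (cases "S = {1..n}")
    case True
    then have "{T\<in>rameaux a n. S \<subseteq> T} = {S}" using less.prems rameauxD(1) by blast
    then show ?thesis using True unfolding gammaT_def by simp
  next
    case False
    then obtain P where P: "P \<in> rameaux a n" "S \<subset> P" "\<forall>R\<in>rameaux a n. S \<subset> R \<longrightarrow> P \<subseteq> R"
      using rameau_parent_exists[OF n less.prems] by blast
    have "finite P" by (rule finite_subset[OF rameauxD(1)[OF P(1)]]) simp
    then have "card S < card P" using P(2) by (rule psubset_card_mono)
    moreover have "card P \<le> n" using card_mono[OF _ rameauxD(1)[OF P(1)]] by simp
    ultimately have IH: "(\<Sum>T\<in>{T\<in>rameaux a n. P \<subseteq> T}. gammaT a n T) = alphaT a P"
      using less.hyps P(1) by simp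
    have "{T\<in>rameaux a n. S \<subseteq> T} = insert S {T\<in>rameaux a n. P \<subseteq> T}"
      using P less.prems by blast
    moreover have "S \<notin> {T\<in>rameaux a n. P \<subseteq> T}" using P(2) by blast
    ultimately show ?thesis
      using IH gammaT_eq_parent[OF False P] finite_rameaux by simp
  qed
qed

section \<open>Rameaux as closed balls\<close>

text \<open>The centre is listed explicitly because \<open>mval a i i\<close> is the junk value \<open>val 0\<close>.\<close>

definition mval_ball :: "(nat \<Rightarrow> rat \<Rightarrow> complex) \<Rightarrow> nat \<Rightarrow> nat \<Rightarrow> rat \<Rightarrow> nat set" where
  "mval_ball a n i r = {k\<in>{1..n}. k = i \<or> r \<le> mval a i k}"

lemma mem_mval_ball: "k \<in> mval_ball a n i r \<longleftrightarrow> k \<in> {1..n} \<and> (k = i \<or> r \<le> mval a i k)"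
  unfolding mval_ball_def by blast

lemma mval_ball_subset: "mval_ball a n i r \<subseteq> {1..n}"
  unfolding mval_ball_def by blast

lemma finite_mval_ball: "finite (mval_ball a n i r)"
  using mval_ball_subset by (rule finite_subset) simp

lemma mval_ball_diameter:
  assumes U: "ultrametric_mval a n" and i: "i \<in> {1..n}"
    and p: "p \<in> mval_ball a n i r" and q: "q \<in> mval_ball a n i r" and "p \<noteq> q"
  shows "r \<le> mval a p q"
proof -
  consider "p = i" | "q = i" | "p \<noteq> i" "q \<noteq> i" by blast
  then show ?thesis
  proof cases
    case 1
    then show ?thesis using q \<open>p \<noteq> q\<close> by (simp add: mem_mval_ball)
  next
    case 2
    then show ?thesis using p \<open>p \<noteq> q\<close> by (simp add: mem_mval_ball mval_commute)
  next
    case 3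
    then have "r \<le> mval a p i" "r \<le> mval a i q" "p \<in> {1..n}" "q \<in> {1..n}"
      using p q by (auto simp: mem_mval_ball mval_commute)
    then show ?thesis using ultrametric_mvalD[OF U, of p i q] i 3 \<open>p \<noteq> q\<close> by linarith
  qed
qed

lemma mval_ball_in_rameaux:
  assumes U: "ultrametric_mval a n" and i: "i \<in> {1..n}"
    and j: "j \<in> mval_ball a n i r" "j \<noteq> i"
  shows "mval_ball a n i r \<in> rameaux a n"
proof -
  let ?B = "mval_ball a n i r"
  have "i \<in> ?B" using i by (simp add: mem_mval_ball)
  then have "card {i, j} \<le> card ?B"
    using j(1) by (intro card_mono finite_mval_ball) simp
  then have "card ?B \<ge> 2" using j(2) by simp
  moreover have "mval a p k < mval a p q \<and> mval a p k = mval a q k"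
    if p: "p \<in> ?B" and q: "q \<in> ?B" and "p \<noteq> q" and k: "k \<in> {1..n} - ?B" for p q k
  proof -
    have out: "mval a i k < r" "k \<noteq> i" using k by (auto simp: mem_mval_ball)
    have same: "mval a s k = mval a i k" if s: "s \<in> ?B" for s
    proof (cases "s = i")
      case False
      then have "mval a i k < mval a i s" "s \<in> {1..n}" "s \<noteq> k"
        using s k out(1) by (auto simp: mem_mval_ball)
      then show ?thesis using mval_isosceles[OF U i] False k out(2) by blast
    qed simp
    show ?thesis
      using same[OF p] same[OF q] out(1) mval_ball_diameter[OF U i p q \<open>p \<noteq> q\<close>] by simp
  qed
  ultimately show ?thesis using mval_ball_subset unfolding rameaux_def by blast
qed

lemma alphaT_mval_ball:
  assumes U: "ultrametric_mval a n" and i: "i \<in> {1..n}" and j: "j \<in> {1..n}" "j \<noteq> i"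
  shows "alphaT a (mval_ball a n i (mval a i j)) = mval a i j"
  unfolding alphaT_def
proof (rule Min_eqI)
  let ?B = "mval_ball a n i (mval a i j)"
  have "finite ((\<lambda>(p, q). mval a p q) ` (?B \<times> ?B))" using finite_mval_ball by simp
  moreover have "{mval a p q |p q. p \<in> ?B \<and> q \<in> ?B \<and> p \<noteq> q} \<subseteq> (\<lambda>(p, q). mval a p q) ` (?B \<times> ?B)"
    by auto
  ultimately show "finite {mval a p q |p q. p \<in> ?B \<and> q \<in> ?B \<and> p \<noteq> q}"
    by (rule finite_subset[rotated])
  show "mval a i j \<le> m" if "m \<in> {mval a p q |p q. p \<in> ?B \<and> q \<in> ?B \<and> p \<noteq> q}" for m
    using that mval_ball_diameter[OF U i] by blast
  have "i \<in> ?B" "j \<in> ?B" using i j by (simp_all add: mem_mval_ball)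
  then show "mval a i j \<in> {mval a p q |p q. p \<in> ?B \<and> q \<in> ?B \<and> p \<noteq> q}" using j(2) by blast
qed

lemma pair_in_rameau_iff:
  assumes i: "i \<in> {1..n}" and j: "j \<in> {1..n}" "j \<noteq> i" and T: "T \<in> rameaux a n"
  shows "i \<in> T \<and> j \<in> T \<longleftrightarrow> mval_ball a n i (mval a i j) \<subseteq> T"
proof
  assume ijT: "i \<in> T \<and> j \<in> T"
  show "mval_ball a n i (mval a i j) \<subseteq> T"
  proof
    fix k assume k: "k \<in> mval_ball a n i (mval a i j)"
    show "k \<in> T"
    proof (rule ccontr)
      assume "k \<notin> T"
      then have "mval a i k < mval a i j" using rameauxD(3)[OF T, of i j k] k ijT j(2)
        by (auto simp: mem_mval_ball)
      moreover have "k \<noteq> i" using ijT \<open>k \<notin> T\<close> by blast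
      ultimately show False using k by (simp add: mem_mval_ball)
    qed
  qed
next
  assume "mval_ball a n i (mval a i j) \<subseteq> T"
  moreover have "i \<in> mval_ball a n i (mval a i j)" "j \<in> mval_ball a n i (mval a i j)"
    using i j by (simp_all add: mem_mval_ball)
  ultimately show "i \<in> T \<and> j \<in> T" by blast
qed

lemma sum_gammaT_rameaux_containing_pair:
  assumes "n \<ge> 2" "ultrametric_mval a n" "i \<in> {1..n}" "j \<in> {1..n}" "j \<noteq> i"
  shows "(\<Sum>T\<in>{T\<in>rameaux a n. i \<in> T \<and> j \<in> T}. gammaT a n T) = mval a i j"
proof -
  have "j \<in> mval_ball a n i (mval a i j)" using assms(4) by (simp add: mem_mval_ball)
  then have B: "mval_ball a n i (mval a i j) \<in> rameaux a n"
    using mval_ball_in_rameaux[OF assms(2,3)] assms(5) by blast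
  have "{T\<in>rameaux a n. i \<in> T \<and> j \<in> T} = {T\<in>rameaux a n. mval_ball a n i (mval a i j) \<subseteq> T}"
    using pair_in_rameau_iff[OF assms(3-5)] by blast
  then show ?thesis
    using sum_gammaT_supersets[OF assms(1) B] alphaT_mval_ball[OF assms(2-5)] by simp
qed

section \<open>Weighted sums of the matrices \<open>A\<^sub>\<mu>(T)\<close>\<close>

lemma sum_magicT_offdiag:
  assumes "finite \<R>" "i \<noteq> j"
  shows "(\<Sum>T\<in>\<R>. g T * magicT \<mu> T i j) = - of_nat (\<mu> i) * (\<Sum>T\<in>{T\<in>\<R>. i \<in> T \<and> j \<in> T}. g T)"
proof -
  have "(\<Sum>T\<in>\<R>. g T * magicT \<mu> T i j) = (\<Sum>T\<in>\<R>. if i \<in> T \<and> j \<in> T then g T * - of_nat (\<mu> i) else 0)"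
    using assms(2) by (intro sum.cong) (auto simp: magicT_def)
  also have "\<dots> = (\<Sum>T\<in>{T\<in>\<R>. i \<in> T \<and> j \<in> T}. g T * - of_nat (\<mu> i))"
    by (rule sum.inter_filter[OF assms(1), symmetric])
  also have "\<dots> = (\<Sum>T\<in>{T\<in>\<R>. i \<in> T \<and> j \<in> T}. g T) * - of_nat (\<mu> i)"
    by (rule sum_distrib_right[symmetric])
  finally show ?thesis by simp
qed

lemma magicT_diag:
  assumes "T \<subseteq> {1..n}"
  shows "magicT \<mu> T i i = (\<Sum>k\<in>{1..n}-{i}. if i \<in> T \<and> k \<in> T then of_nat (\<mu> k) else 0)"
proof (cases "i \<in> T")
  case True
  have "{k\<in>{1..n}-{i}. k \<in> T} = T - {i}" using assms by blast
  then have "(\<Sum>k\<in>T-{i}. of_nat (\<mu> k)) = (\<Sum>k\<in>{1..n}-{i}. if k \<in> T then of_nat (\<mu> k) else (0::rat))"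
    using sum.inter_filter[of "{1..n}-{i}" "\<lambda>k. of_nat (\<mu> k) :: rat" "\<lambda>k. k \<in> T"] by simp
  then show ?thesis using True by (simp add: magicT_def)
qed (simp add: magicT_def)

lemma sum_magicT_diag:
  assumes "finite \<R>" "\<forall>T\<in>\<R>. T \<subseteq> {1..n}"
  shows "(\<Sum>T\<in>\<R>. g T * magicT \<mu> T i i)
    = (\<Sum>k\<in>{1..n}-{i}. of_nat (\<mu> k) * (\<Sum>T\<in>{T\<in>\<R>. i \<in> T \<and> k \<in> T}. g T))"
proof -
  have "(\<Sum>T\<in>\<R>. g T * magicT \<mu> T i i)
      = (\<Sum>T\<in>\<R>. \<Sum>k\<in>{1..n}-{i}. of_nat (\<mu> k) * (if i \<in> T \<and> k \<in> T then g T else 0))"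
  proof (intro sum.cong refl)
    fix T assume "T \<in> \<R>"
    then have "T \<subseteq> {1..n}" using assms(2) by blast
    then have "g T * magicT \<mu> T i i
        = (\<Sum>k\<in>{1..n}-{i}. g T * (if i \<in> T \<and> k \<in> T then of_nat (\<mu> k) else 0))"
      by (simp only: magicT_diag sum_distrib_left)
    also have "\<dots> = (\<Sum>k\<in>{1..n}-{i}. of_nat (\<mu> k) * (if i \<in> T \<and> k \<in> T then g T else 0))"
      by (intro sum.cong) auto
    finally show "g T * magicT \<mu> T i i
        = (\<Sum>k\<in>{1..n}-{i}. of_nat (\<mu> k) * (if i \<in> T \<and> k \<in> T then g T else 0))" .
  qed
  also have "\<dots> = (\<Sum>k\<in>{1..n}-{i}. of_nat (\<mu> k) * (\<Sum>T\<in>\<R>. if i \<in> T \<and> k \<in> T then g T else 0))"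
    by (simp add: sum.swap[of _ \<R>] sum_distrib_left)
  also have "\<dots> = (\<Sum>k\<in>{1..n}-{i}. of_nat (\<mu> k) * (\<Sum>T\<in>{T\<in>\<R>. i \<in> T \<and> k \<in> T}. g T))"
    by (simp add: sum.inter_filter[OF assms(1)])
  finally show ?thesis .
qed

theorem mainTheorem9:
  fixes n :: nat and a :: "nat \<Rightarrow> rat \<Rightarrow> complex" and \<mu> :: "nat \<Rightarrow> nat"
  assumes "n \<ge> 2"
    and "\<forall>i\<in>{1..n}. a i \<in> puiseux"
    and "inj_on a {1..n}"
    and "\<forall>i\<in>{1..n}. \<mu> i > 0"
  shows "\<forall>i\<in>{1..n}. \<forall>j\<in>{1..n}.
           magic a \<mu> n i j = (\<Sum>T\<in>rameaux a n. gammaT a n T * magicT \<mu> T i j)"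
proof (intro ballI)
  fix i j assume i: "i \<in> {1..n}" and j: "j \<in> {1..n}"
  have U: "ultrametric_mval a n" using assms(2,3) by (rule ultrametric_mval_if_puiseux)
  note pair_sum = sum_gammaT_rameaux_containing_pair[OF assms(1) U i]
  show "magic a \<mu> n i j = (\<Sum>T\<in>rameaux a n. gammaT a n T * magicT \<mu> T i j)"
  proof (cases "i = j")
    case True
    have "(\<Sum>T\<in>rameaux a n. gammaT a n T * magicT \<mu> T i i)
        = (\<Sum>k\<in>{1..n}-{i}. of_nat (\<mu> k) * (\<Sum>T\<in>{T\<in>rameaux a n. i \<in> T \<and> k \<in> T}. gammaT a n T))"
      using rameauxD(1) by (intro sum_magicT_diag[OF finite_rameaux]) blast
    also have "\<dots> = (\<Sum>k\<in>{1..n}-{i}. of_nat (\<mu> k) * mval a i k)"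
      using pair_sum by (intro sum.cong) auto
    finally show ?thesis using True by (simp add: magic_def mval_commute)
  next
    case False
    then show ?thesis
      using pair_sum[OF j] by (simp add: magic_def sum_magicT_offdiag[OF finite_rameaux] eq_commute)
  qed
qed

end
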